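(* Let $0<3x_0<L$, $\mu>0$, $\nu\in\mathbb R$, and consider $(r\ddot u)''+\mu(q\dot u)'+pu=\nu$ on $(0,2L)$. (i) If $\mu\neq1$, then $u_\nu(s)=\frac{\nu}{(2-\lambda)(1-\mu)}H(s)^{-1}$ is a solution. (ii) If $\mu=1$, then $u_\nu(s)=\frac{\nu}{2\lambda}\theta(s)(s-L)$ is a solution.
   Context: $\sigma=\pi\sqrt{x_0/(L+x_0)}$, $k=L/\sin\sigma$, $\lambda=\frac{2L}{L+x_0}$, $H(s)=\frac{\pi}{\sigma\sqrt{k^2-(s-L)^2}}$ for $s\in[0,2L]$, $\theta(s)=\int_0^sH(l)\,dl$. Set $r=2/H^3$, $q=2/H$, $p=(2-\lambda)H$; derivatives are with respect to $s$. *)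

theory Defs
  imports "HOL-Analysis.Analysis"
begin

definition sigma :: "real \<Rightarrow> real \<Rightarrow> real" where
  "sigma L x0 = pi * sqrt (x0 / (L + x0))"

definition kk :: "real \<Rightarrow> real \<Rightarrow> real" where
  "kk L x0 = L / sin (sigma L x0)"

definition lam :: "real \<Rightarrow> real \<Rightarrow> real" where
  "lam L x0 = 2 * L / (L + x0)"

definition HH :: "real \<Rightarrow> real \<Rightarrow> real \<Rightarrow> real" where
  "HH L x0 s = pi / (sigma L x0 * sqrt ((kk L x0)^2 - (s - L)^2))"

definition theta :: "real \<Rightarrow> real \<Rightarrow> real \<Rightarrow> real" where
  "theta L x0 s = integral {0..s} (HH L x0)"

definition rr :: "real \<Rightarrow> real \<Rightarrow> real \<Rightarrow> real" where
  "rr L x0 s = 2 / (HH L x0 s)^3"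

definition qq :: "real \<Rightarrow> real \<Rightarrow> real \<Rightarrow> real" where
  "qq L x0 s = 2 / HH L x0 s"

definition pp :: "real \<Rightarrow> real \<Rightarrow> real \<Rightarrow> real" where
  "pp L x0 s = (2 - lam L x0) * HH L x0 s"

definition is_solution ::
  "(real \<Rightarrow> real) \<Rightarrow> (real \<Rightarrow> real) \<Rightarrow> (real \<Rightarrow> real) \<Rightarrow> real \<Rightarrow> real \<Rightarrow> real \<Rightarrow> real
     \<Rightarrow> (real \<Rightarrow> real) \<Rightarrow> bool" where
  "is_solution r q p mu nu a b u \<longleftrightarrow>
     (\<forall>s\<in>{a<..<b}.
        u differentiable (at s) \<and>
        deriv u differentiable (at s) \<and>
        (\<lambda>t. r t * deriv (deriv u) t) differentiable (at s) \<and>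
        deriv (\<lambda>t. r t * deriv (deriv u) t) differentiable (at s) \<and>
        (\<lambda>t. q t * deriv u t) differentiable (at s) \<and>
        deriv (deriv (\<lambda>t. r t * deriv (deriv u) t)) s
          + mu * deriv (\<lambda>t. q t * deriv u t) s + p s * u s = nu)"

end

theory Submission
  imports Defs
begin

text \<open>With \<open>\<rho> = \<sigma>/\<pi>\<close> and the semicircle \<open>w(s) = sqrt (k\<^sup>2 - (s - L)\<^sup>2)\<close> one has
  \<open>H = 1/(\<rho> w)\<close>, \<open>2 - \<lambda> = 2\<rho>\<^sup>2\<close>, and \<open>w' = -(s - L)/w\<close>, \<open>w'' = -k\<^sup>2/w\<^sup>3\<close>; the hypothesis
  \<open>3 x\<^sub>0 < L\<close> gives \<open>\<sigma> < \<pi>/2\<close>, hence \<open>k > L\<close>, so \<open>w > 0\<close> on \<open>[0, 2L]\<close>.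
  For \<open>u = A/H = A\<rho> w\<close> the term \<open>r u'' = 2\<rho>\<^sup>3 w\<^sup>3 u''\<close> is constant and \<open>q u' = 2\<rho> w u'\<close> is
  affine, so the equation collapses to \<open>(1 - \<mu>)(2 - \<lambda>) A = \<nu>\<close>. For \<open>u = b \<theta> (s - L)\<close>
  one finds \<open>r u'' = 2\<rho>\<^sup>2 b (2k\<^sup>2 - (s - L)\<^sup>2)\<close>, and for \<open>\<mu> = 1\<close> the terms containing
  \<open>\<theta>\<close> itself cancel between \<open>(q u')'\<close> and \<open>p u\<close>, leaving \<open>2 \<lambda> b = \<nu>\<close>.\<close>

lemma sigma_pos:
  assumes "0 < x0" and "0 < L + x0"
  shows "0 < sigma L x0"
  using assms by (simp add: sigma_def)

lemma sigma_less_pi_half: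
  assumes "0 \<le> x0" and "3 * x0 < L"
  shows "sigma L x0 < pi / 2"
proof -
  have "x0 / (L + x0) < (1 / 2)^2"
    using assms by (simp add: field_simps power2_eq_square)
  then have "sqrt (x0 / (L + x0)) < 1 / 2"
    using real_sqrt_less_mono by fastforce
  then show ?thesis
    by (simp add: sigma_def)
qed

lemma less_kk:
  assumes "0 < x0" and "3 * x0 < L"
  shows "L < kk L x0"
proof -
  have "0 < sigma L x0"
    using assms by (intro sigma_pos) auto
  moreover have "sigma L x0 < pi / 2"
    using assms by (intro sigma_less_pi_half) auto
  ultimately have "0 < sin (sigma L x0)" and "sin (sigma L x0) < 1"
    using sin_gt_zero sin_monotone_2pi[of "sigma L x0" "pi / 2"] by auto
  then show ?thesis
    using assms by (simp add: kk_def less_divide_eq)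
qed

lemma two_minus_lam_eq:
  assumes "0 \<le> x0" and "0 < L + x0"
  shows "2 - lam L x0 = 2 * (sigma L x0 / pi)^2"
  using assms by (simp add: sigma_def lam_def field_simps)

lemma abs_diff_less_kk:
  assumes "0 < x0" and "3 * x0 < L" and "t \<in> {0..2 * L}"
  shows "\<bar>t - L\<bar> < kk L x0"
  using assms less_kk[OF assms(1,2)] by auto

lemma semicircle_pos:
  fixes t c k :: real
  assumes "\<bar>t - c\<bar> < k"
  shows "0 < k^2 - (t - c)^2"
proof -
  have "\<bar>t - c\<bar>^2 < k^2"
    using assms by (intro power_strict_mono) auto
  then show ?thesis
    by simp
qed

lemma has_real_derivative_semicircle:
  fixes t c k :: real
  assumes "\<bar>t - c\<bar> < k"
  shows "((\<lambda>t. sqrt (k^2 - (t - c)^2)) has_real_derivative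
           -(t - c) / sqrt (k^2 - (t - c)^2)) (at t)"
proof -
  have "((\<lambda>t. k^2 - (t - c)^2) has_real_derivative -2 * (t - c)) (at t)"
    by (auto intro!: derivative_eq_intros)
  then have "((\<lambda>t. sqrt (k^2 - (t - c)^2)) has_real_derivative
               inverse (sqrt (k^2 - (t - c)^2)) / 2 * (-2 * (t - c))) (at t)"
    by (rule DERIV_chain2[where g = "\<lambda>t. k^2 - (t - c)^2",
          OF DERIV_real_sqrt[OF semicircle_pos[OF assms]]])
  also have "inverse (sqrt (k^2 - (t - c)^2)) / 2 * (-2 * (t - c)) =
               -(t - c) / sqrt (k^2 - (t - c)^2)"
    using semicircle_pos[OF assms] by (simp add: field_simps)
  finally show ?thesis .
qed

lemma has_real_derivative_semicircle_slope:
  fixes t c k :: real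
  assumes "\<bar>t - c\<bar> < k"
  shows "((\<lambda>t. (t - c) / sqrt (k^2 - (t - c)^2)) has_real_derivative
           k^2 / sqrt (k^2 - (t - c)^2)^3) (at t)"
proof -
  define w where "w = (\<lambda>t. sqrt (k^2 - (t - c)^2))"
  have "0 < w t" and w2: "(w t)^2 = k^2 - (t - c)^2"
    using semicircle_pos[OF assms] by (simp_all add: w_def)
  have w': "(w has_real_derivative -(t - c) / w t) (at t)"
    unfolding w_def by (rule has_real_derivative_semicircle[OF assms])
  have "((\<lambda>t. (t - c) / w t) has_real_derivative
          (w t - (t - c) * (-(t - c) / w t)) / (w t)^2) (at t)"
    using w' \<open>0 < w t\<close>
    by (auto intro!: derivative_eq_intros simp: power2_eq_square)
  also have "(w t - (t - c) * (-(t - c) / w t)) / (w t)^2 = k^2 / (w t)^3"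
    using \<open>0 < w t\<close> w2 by (simp add: field_simps power2_eq_square power3_eq_cube)
  finally show ?thesis
    by (simp add: w_def)
qed

lemma has_real_derivative_inverse_semicircle:
  fixes t c k :: real
  assumes "\<bar>t - c\<bar> < k"
  shows "((\<lambda>t. 1 / sqrt (k^2 - (t - c)^2)) has_real_derivative
           (t - c) / sqrt (k^2 - (t - c)^2)^3) (at t)"
proof -
  define w where "w = (\<lambda>t. sqrt (k^2 - (t - c)^2))"
  have "0 < w t"
    using semicircle_pos[OF assms] by (simp add: w_def)
  have w': "(w has_real_derivative -(t - c) / w t) (at t)"
    unfolding w_def by (rule has_real_derivative_semicircle[OF assms])
  have "((\<lambda>t. 1 / w t) has_real_derivative -(-(t - c) / w t) / (w t)^2) (at t)"
    using w' \<open>0 < w t\<close>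
    by (auto intro!: derivative_eq_intros simp: power2_eq_square)
  also have "-(-(t - c) / w t) / (w t)^2 = (t - c) / (w t)^3"
    using \<open>0 < w t\<close> by (simp add: field_simps power2_eq_square power3_eq_cube)
  finally show ?thesis
    by (simp add: w_def)
qed

lemma has_real_derivative_theta:
  assumes "0 < x0" and "3 * x0 < L" and "s \<in> {0<..<2 * L}"
  shows "(theta L x0 has_real_derivative HH L x0 s) (at s)"
proof -
  have "0 < sigma L x0"
    using assms by (intro sigma_pos) auto
  then have "sigma L x0 * sqrt ((kk L x0)^2 - (t - L)^2) \<noteq> 0" if "t \<in> {0..2 * L}" for t
    using semicircle_pos[OF abs_diff_less_kk[OF assms(1,2) that]] by simp
  then have "continuous_on {0..2 * L} (HH L x0)"
    unfolding HH_def by (intro continuous_intros) auto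
  then have "(theta L x0 has_real_derivative HH L x0 s) (at s within {0..2 * L})"
    unfolding theta_def using assms(3) by (intro integral_has_real_derivative) auto
  moreover have "at s within {0..2 * L} = at s"
    using assms(3) by (intro at_within_interior) auto
  ultimately show ?thesis
    by simp
qed

lemma is_solutionI:
  fixes u u' u'' R R' R'' Q Q' :: "real \<Rightarrow> real"
  assumes u': "\<And>s. s \<in> {a<..<b} \<Longrightarrow> (u has_real_derivative u' s) (at s)"
    and u'': "\<And>s. s \<in> {a<..<b} \<Longrightarrow> (u' has_real_derivative u'' s) (at s)"
    and R: "\<And>s. s \<in> {a<..<b} \<Longrightarrow> r s * u'' s = R s"
    and R': "\<And>s. s \<in> {a<..<b} \<Longrightarrow> (R has_real_derivative R' s) (at s)"
    and R'': "\<And>s. s \<in> {a<..<b} \<Longrightarrow> (R' has_real_derivative R'' s) (at s)"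
    and Q: "\<And>s. s \<in> {a<..<b} \<Longrightarrow> q s * u' s = Q s"
    and Q': "\<And>s. s \<in> {a<..<b} \<Longrightarrow> (Q has_real_derivative Q' s) (at s)"
    and equation: "\<And>s. s \<in> {a<..<b} \<Longrightarrow> R'' s + mu * Q' s + p s * u s = nu"
  shows "is_solution r q p mu nu a b u"
  unfolding is_solution_def
proof (intro ballI conjI)
  fix s
  assume s: "s \<in> {a<..<b}"
  let ?I = "{a<..<b}" and ?R = "\<lambda>t. r t * deriv (deriv u) t" and ?Q = "\<lambda>t. q t * deriv u t"
  have "open ?I"
    by simp
  have deriv_u: "deriv u t = u' t" if "t \<in> ?I" for t
    using u'[OF that] by (rule DERIV_imp_deriv)
  have deriv_u_has_derivative: "(deriv u has_real_derivative u'' t) (at t)" if "t \<in> ?I" for t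
    using u''[OF that] \<open>open ?I\<close> that
    by (rule has_field_derivative_transform_within_open) (simp add: deriv_u)
  have R_eq: "R t = ?R t" if "t \<in> ?I" for t
    using R[OF that] DERIV_imp_deriv[OF deriv_u_has_derivative[OF that]] by simp
  have R_has_derivative: "(?R has_real_derivative R' t) (at t)" if "t \<in> ?I" for t
    using R'[OF that] \<open>open ?I\<close> that R_eq by (rule has_field_derivative_transform_within_open)
  have deriv_R_has_derivative: "(deriv ?R has_real_derivative R'' s) (at s)"
    using R''[OF s] \<open>open ?I\<close> s
    by (rule has_field_derivative_transform_within_open)
      (simp add: DERIV_imp_deriv[OF R_has_derivative])
  have Q_has_derivative: "(?Q has_real_derivative Q' s) (at s)"
    using Q'[OF s] \<open>open ?I\<close> s
    by (rule has_field_derivative_transform_within_open) (simp add: Q deriv_u)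
  show "u differentiable at s"
    using u'[OF s] real_differentiable_def by blast
  show "deriv u differentiable at s"
    using deriv_u_has_derivative[OF s] real_differentiable_def by blast
  show "?R differentiable at s"
    using R_has_derivative[OF s] real_differentiable_def by blast
  show "deriv ?R differentiable at s"
    using deriv_R_has_derivative real_differentiable_def by blast
  show "?Q differentiable at s"
    using Q_has_derivative real_differentiable_def by blast
  show "deriv (deriv ?R) s + mu * deriv ?Q s + p s * u s = nu"
    using equation[OF s] DERIV_imp_deriv[OF deriv_R_has_derivative]
      DERIV_imp_deriv[OF Q_has_derivative] by simp
qed

lemma is_solution_inverse_HH:
  assumes "0 < x0" and "3 * x0 < L" and "mu \<noteq> 1"
  shows "is_solution (rr L x0) (qq L x0) (pp L x0) mu nu 0 (2 * L)
           (\<lambda>s. nu / ((2 - lam L x0) * (1 - mu)) * inverse (HH L x0 s))"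
proof -
  define \<rho> where "\<rho> = sigma L x0 / pi"
  define k where "k = kk L x0"
  define w where "w = (\<lambda>t. sqrt (k^2 - (t - L)^2))"
  define A where "A = nu / ((2 - lam L x0) * (1 - mu))"
  have "0 < \<rho>"
    unfolding \<rho>_def using assms by (intro divide_pos_pos sigma_pos pi_gt_zero) auto
  have two_minus_lam: "2 - lam L x0 = 2 * \<rho>^2"
    unfolding \<rho>_def using assms by (intro two_minus_lam_eq) auto
  have HH_eq: "HH L x0 t = 1 / (\<rho> * w t)" for t
    by (simp add: HH_def \<rho>_def w_def k_def)
  have u_eq: "(\<lambda>s. nu / ((2 - lam L x0) * (1 - mu)) * inverse (HH L x0 s)) = (\<lambda>t. A * \<rho> * w t)"
    by (simp add: HH_eq A_def mult.assoc)
  show ?thesis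
    unfolding u_eq
  proof (rule is_solutionI[where u' = "\<lambda>t. -(A * \<rho>) * ((t - L) / w t)"
        and u'' = "\<lambda>t. -(A * \<rho>) * (k^2 / w t ^ 3)"
        and R = "\<lambda>_. -2 * A * \<rho>^4 * k^2" and R' = "\<lambda>_. 0" and R'' = "\<lambda>_. 0"
        and Q = "\<lambda>t. -2 * A * \<rho>^2 * (t - L)" and Q' = "\<lambda>_. -2 * A * \<rho>^2"])
    fix s
    assume "s \<in> {0<..<2 * L}"
    then have s: "\<bar>s - L\<bar> < k"
      using abs_diff_less_kk[OF assms(1,2)] by (simp add: k_def)
    have "0 < w s"
      using semicircle_pos[OF s] by (simp add: w_def)
    have w': "(w has_real_derivative -(s - L) / w s) (at s)"
      unfolding w_def by (rule has_real_derivative_semicircle[OF s])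
    show "((\<lambda>t. A * \<rho> * w t) has_real_derivative -(A * \<rho>) * ((s - L) / w s)) (at s)"
      using w' by (auto intro!: derivative_eq_intros simp: algebra_simps)
    show "((\<lambda>t. -(A * \<rho>) * ((t - L) / w t)) has_real_derivative
            -(A * \<rho>) * (k^2 / w s ^ 3)) (at s)"
      unfolding w_def by (intro DERIV_cmult has_real_derivative_semicircle_slope[OF s])
    show "rr L x0 s * (-(A * \<rho>) * (k^2 / w s ^ 3)) = -2 * A * \<rho>^4 * k^2"
      using \<open>0 < w s\<close> \<open>0 < \<rho>\<close> by (simp add: rr_def HH_eq field_simps power_numeral_reduce)
    show "((\<lambda>_. -2 * A * \<rho>^4 * k^2) has_real_derivative 0) (at s)"
      and "((\<lambda>_. 0) has_real_derivative 0) (at s)"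
      by simp_all
    show "qq L x0 s * (-(A * \<rho>) * ((s - L) / w s)) = -2 * A * \<rho>^2 * (s - L)"
      using \<open>0 < w s\<close> \<open>0 < \<rho>\<close> by (simp add: qq_def HH_eq field_simps power2_eq_square)
    show "((\<lambda>t. -2 * A * \<rho>^2 * (t - L)) has_real_derivative -2 * A * \<rho>^2) (at s)"
      by (auto intro!: derivative_eq_intros)
    have "pp L x0 s * (A * \<rho> * w s) = 2 * \<rho>^2 * A"
      using \<open>0 < w s\<close> \<open>0 < \<rho>\<close> by (simp add: pp_def HH_eq two_minus_lam power2_eq_square)
    then have "0 + mu * (-2 * A * \<rho>^2) + pp L x0 s * (A * \<rho> * w s) = (2 - lam L x0) * (1 - mu) * A"
      by (simp add: two_minus_lam algebra_simps)
    also have "\<dots> = nu"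
      using \<open>0 < \<rho>\<close> \<open>mu \<noteq> 1\<close> by (simp add: A_def two_minus_lam)
    finally show "0 + mu * (-2 * A * \<rho>^2) + pp L x0 s * (A * \<rho> * w s) = nu" .
  qed
qed

lemma is_solution_theta:
  assumes "0 < x0" and "3 * x0 < L"
  shows "is_solution (rr L x0) (qq L x0) (pp L x0) 1 nu 0 (2 * L)
           (\<lambda>s. nu / (2 * lam L x0) * theta L x0 s * (s - L))"
proof -
  define \<rho> where "\<rho> = sigma L x0 / pi"
  define k where "k = kk L x0"
  define w where "w = (\<lambda>t. sqrt (k^2 - (t - L)^2))"
  define b where "b = nu / (2 * lam L x0)"
  define H where "H = HH L x0"
  define \<Theta> where "\<Theta> = theta L x0"
  have "0 < \<rho>"
    unfolding \<rho>_def using assms by (intro divide_pos_pos sigma_pos pi_gt_zero) auto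
  have two_minus_lam: "2 - lam L x0 = 2 * \<rho>^2"
    unfolding \<rho>_def using assms by (intro two_minus_lam_eq) auto
  have H_eq: "H t = 1 / (\<rho> * w t)" for t
    by (simp add: H_def HH_def \<rho>_def w_def k_def)
  show ?thesis
    unfolding b_def[symmetric] \<Theta>_def[symmetric]
  proof (rule is_solutionI[where u' = "\<lambda>t. b * (H t * (t - L) + \<Theta> t)"
        and u'' = "\<lambda>t. b * (1 / \<rho> * ((t - L) / w t ^ 3) * (t - L) + 2 * H t)"
        and R = "\<lambda>t. 2 * \<rho>^2 * b * (2 * k^2 - (t - L)^2)"
        and R' = "\<lambda>t. -4 * \<rho>^2 * b * (t - L)" and R'' = "\<lambda>_. -4 * \<rho>^2 * b"
        and Q = "\<lambda>t. 2 * b * (t - L) + 2 * \<rho> * b * w t * \<Theta> t"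
        and Q' = "\<lambda>t. 4 * b - 2 * \<rho> * b * (t - L) * \<Theta> t / w t"])
    fix s
    assume "s \<in> {0<..<2 * L}"
    then have \<Theta>': "(\<Theta> has_real_derivative H s) (at s)"
      using has_real_derivative_theta[OF assms] by (simp add: \<Theta>_def H_def)
    from \<open>s \<in> {0<..<2 * L}\<close> have s: "\<bar>s - L\<bar> < k"
      using abs_diff_less_kk[OF assms] by (simp add: k_def)
    have "0 < w s" and w2: "k^2 = (w s)^2 + (s - L)^2"
      using semicircle_pos[OF s] by (simp_all add: w_def)
    have w': "(w has_real_derivative -(s - L) / w s) (at s)"
      unfolding w_def by (rule has_real_derivative_semicircle[OF s])
    have "H = (\<lambda>t. 1 / \<rho> * (1 / w t))"
      by (simp add: H_eq fun_eq_iff)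
    then have H': "(H has_real_derivative 1 / \<rho> * ((s - L) / w s ^ 3)) (at s)"
      unfolding w_def by (simp only:) (intro DERIV_cmult has_real_derivative_inverse_semicircle[OF s])
    show "((\<lambda>t. b * \<Theta> t * (t - L)) has_real_derivative b * (H s * (s - L) + \<Theta> s)) (at s)"
      using \<Theta>' by (auto intro!: derivative_eq_intros simp: algebra_simps)
    show "((\<lambda>t. b * (H t * (t - L) + \<Theta> t)) has_real_derivative
            b * (1 / \<rho> * ((s - L) / w s ^ 3) * (s - L) + 2 * H s)) (at s)"
      using \<Theta>' H' \<open>0 < w s\<close> \<open>0 < \<rho>\<close>
      by (auto intro!: derivative_eq_intros simp: field_simps)
    show "rr L x0 s * (b * (1 / \<rho> * ((s - L) / w s ^ 3) * (s - L) + 2 * H s)) =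
            2 * \<rho>^2 * b * (2 * k^2 - (s - L)^2)"
      using \<open>0 < w s\<close> \<open>0 < \<rho>\<close> unfolding w2
      by (simp add: rr_def H_def[symmetric] H_eq field_simps power2_eq_square power3_eq_cube)
    show "((\<lambda>t. 2 * \<rho>^2 * b * (2 * k^2 - (t - L)^2)) has_real_derivative
            -4 * \<rho>^2 * b * (s - L)) (at s)"
      and "((\<lambda>t. -4 * \<rho>^2 * b * (t - L)) has_real_derivative -4 * \<rho>^2 * b) (at s)"
      by (auto intro!: derivative_eq_intros simp: algebra_simps)
    show "qq L x0 s * (b * (H s * (s - L) + \<Theta> s)) = 2 * b * (s - L) + 2 * \<rho> * b * w s * \<Theta> s"
      using \<open>0 < w s\<close> \<open>0 < \<rho>\<close> by (simp add: qq_def H_def[symmetric] H_eq field_simps)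
    show "((\<lambda>t. 2 * b * (t - L) + 2 * \<rho> * b * w t * \<Theta> t) has_real_derivative
            4 * b - 2 * \<rho> * b * (s - L) * \<Theta> s / w s) (at s)"
      using w' \<Theta>' \<open>0 < w s\<close> \<open>0 < \<rho>\<close>
      by (auto intro!: derivative_eq_intros simp: H_eq field_simps)
    have "pp L x0 s * (b * \<Theta> s * (s - L)) = 2 * \<rho> * b * (s - L) * \<Theta> s / w s"
      using \<open>0 < w s\<close> \<open>0 < \<rho>\<close>
      by (simp add: pp_def H_def[symmetric] H_eq two_minus_lam field_simps power2_eq_square)
    then have "-4 * \<rho>^2 * b + 1 * (4 * b - 2 * \<rho> * b * (s - L) * \<Theta> s / w s)
                 + pp L x0 s * (b * \<Theta> s * (s - L)) = 2 * (2 - 2 * \<rho>^2) * b"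
      by (simp add: algebra_simps)
    also have "\<dots> = 2 * lam L x0 * b"
      by (simp add: two_minus_lam[symmetric])
    also have "\<dots> = nu"
      using assms by (simp add: b_def lam_def)
    finally show "-4 * \<rho>^2 * b + 1 * (4 * b - 2 * \<rho> * b * (s - L) * \<Theta> s / w s)
                    + pp L x0 s * (b * \<Theta> s * (s - L)) = nu" .
  qed
qed

theorem mainTheorem17:
  fixes L x0 mu nu :: real
  assumes "0 < 3 * x0" and "3 * x0 < L" and "mu > 0"
  shows "(mu \<noteq> 1 \<longrightarrow>
           is_solution (rr L x0) (qq L x0) (pp L x0) mu nu 0 (2 * L)
             (\<lambda>s. nu / ((2 - lam L x0) * (1 - mu)) * inverse (HH L x0 s)))
       \<and> (mu = 1 \<longrightarrow>
           is_solution (rr L x0) (qq L x0) (pp L x0) mu nu 0 (2 * L)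
             (\<lambda>s. nu / (2 * lam L x0) * theta L x0 s * (s - L)))"
proof (intro conjI impI)
  have "0 < x0"
    using assms(1) by simp
  then show "is_solution (rr L x0) (qq L x0) (pp L x0) mu nu 0 (2 * L)
      (\<lambda>s. nu / ((2 - lam L x0) * (1 - mu)) * inverse (HH L x0 s))" if "mu \<noteq> 1"
    using assms(2) that by (rule is_solution_inverse_HH)
  show "is_solution (rr L x0) (qq L x0) (pp L x0) mu nu 0 (2 * L)
      (\<lambda>s. nu / (2 * lam L x0) * theta L x0 s * (s - L))" if "mu = 1"
    using \<open>0 < x0\<close> assms(2) unfolding that by (rule is_solution_theta)
qed

end
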